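(* In the setting described in the context, $R_{t\infty}\ge R_{s\infty}$ (almost surely) for all $t\ge s\ge0$.
   Context: Let $(\Omega,\mathcal F,\mathbb P)$ be a probability space with a filtration $\{\mathcal F_t\}_{t\ge0}$ satisfying the usual conditions; (in)equalities between random variables hold a.s. A pricing kernel is an $\{\mathcal F_t\}$-adapted càdlàg semimartingale $\{\pi_t\}_{t\ge0}$ with (a) $\pi_t>0$, (b) $\mathbb E[\pi_t]<\infty$ for all $t\ge0$, (c) $\liminf_{t\to\infty}\mathbb E[\pi_t]=0$. Fix such a pricing kernel and set $P_{tT}=\pi_t^{-1}\mathbb E[\pi_T\mid\mathcal F_t]$ for $0\le t<T$. The exponential rate is $R_{tT}=-(T-t)^{-1}\ln P_{tT}$. For a family $\{A_x\}_{x\in\mathbb R^+}$ of $\mathcal F_t$-measurable extended-real random variables, $\limsup_{x\to\infty}A_x:=\operatorname{ess\,inf}_{x}\operatorname{ess\,sup}_{y\ge x}A_y$, with essential supremum/infimum taken among $\mathcal F_t$-measurable random variables. The long exponential rate is $R_{t\infty}=\limsup_{T\to\infty}R_{tT}$. *)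

theory Defs
  imports "HOL-Probability.Probability"
begin

definition filtration_on :: "'a measure \<Rightarrow> (real \<Rightarrow> 'a measure) \<Rightarrow> bool" where
  "filtration_on M F \<longleftrightarrow>
     (\<forall>t\<ge>0. subalgebra M (F t)) \<and>
     (\<forall>s t. 0 \<le> s \<longrightarrow> s \<le> t \<longrightarrow> sets (F s) \<subseteq> sets (F t))"

definition usual_conditions :: "'a measure \<Rightarrow> (real \<Rightarrow> 'a measure) \<Rightarrow> bool" where
  "usual_conditions M F \<longleftrightarrow>
     filtration_on M F \<and>
     (\<forall>N B. N \<in> null_sets M \<longrightarrow> B \<subseteq> N \<longrightarrow> B \<in> sets M) \<and>
     null_sets M \<subseteq> sets (F 0) \<and>
     (\<forall>t\<ge>0. sets (F t) = (\<Inter>u\<in>{t<..}. sets (F u)))"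

definition adapted :: "(real \<Rightarrow> 'a measure) \<Rightarrow> (real \<Rightarrow> 'a \<Rightarrow> real) \<Rightarrow> bool" where
  "adapted F X \<longleftrightarrow> (\<forall>t\<ge>0. X t \<in> borel_measurable (F t))"

definition cadlag :: "'a measure \<Rightarrow> (real \<Rightarrow> 'a \<Rightarrow> real) \<Rightarrow> bool" where
  "cadlag M X \<longleftrightarrow>
     (\<forall>\<omega>\<in>space M. \<forall>t\<ge>0.
        continuous (at_right t) (\<lambda>s. X s \<omega>) \<and>
        (t > 0 \<longrightarrow> (\<exists>l. ((\<lambda>s. X s \<omega>) \<longlongrightarrow> l) (at_left t))))"

definition martingale :: "'a measure \<Rightarrow> (real \<Rightarrow> 'a measure) \<Rightarrow> (real \<Rightarrow> 'a \<Rightarrow> real) \<Rightarrow> bool" where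
  "martingale M F X \<longleftrightarrow>
     adapted F X \<and> (\<forall>t\<ge>0. integrable M (X t)) \<and>
     (\<forall>s t. 0 \<le> s \<longrightarrow> s \<le> t \<longrightarrow>
        (AE \<omega> in M. real_cond_exp M (F s) (X t) \<omega> = X s \<omega>))"

definition stopping_time_ext :: "'a measure \<Rightarrow> (real \<Rightarrow> 'a measure) \<Rightarrow> ('a \<Rightarrow> ereal) \<Rightarrow> bool" where
  "stopping_time_ext M F \<tau> \<longleftrightarrow>
     (\<forall>\<omega>\<in>space M. 0 \<le> \<tau> \<omega>) \<and>
     (\<forall>t\<ge>0. {\<omega>\<in>space M. \<tau> \<omega> \<le> ereal t} \<in> sets (F t))"

definition stopped :: "(real \<Rightarrow> 'a \<Rightarrow> real) \<Rightarrow> ('a \<Rightarrow> ereal) \<Rightarrow> real \<Rightarrow> 'a \<Rightarrow> real" where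
  "stopped X \<tau> = (\<lambda>t \<omega>. X (real_of_ereal (min (ereal t) (\<tau> \<omega>))) \<omega>)"

definition local_martingale :: "'a measure \<Rightarrow> (real \<Rightarrow> 'a measure) \<Rightarrow> (real \<Rightarrow> 'a \<Rightarrow> real) \<Rightarrow> bool" where
  "local_martingale M F X \<longleftrightarrow>
     adapted F X \<and> cadlag M X \<and>
     (\<exists>\<tau> :: nat \<Rightarrow> 'a \<Rightarrow> ereal.
        (\<forall>n. stopping_time_ext M F (\<tau> n)) \<and>
        (AE \<omega> in M. incseq (\<lambda>n. \<tau> n \<omega>) \<and> (\<lambda>n. \<tau> n \<omega>) \<longlonglongrightarrow> \<infinity>) \<and>
        (\<forall>n. martingale M F (stopped X (\<tau> n))))"

definition finite_variation :: "'a measure \<Rightarrow> (real \<Rightarrow> 'a \<Rightarrow> real) \<Rightarrow> bool" where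
  "finite_variation M A \<longleftrightarrow>
     (\<forall>\<omega>\<in>space M. \<forall>t\<ge>0. \<exists>C. \<forall>(n::nat) (p::nat \<Rightarrow> real).
        0 \<le> p 0 \<longrightarrow> (\<forall>i<n. p i \<le> p (Suc i)) \<longrightarrow> p n \<le> t \<longrightarrow>
        (\<Sum>i<n. \<bar>A (p (Suc i)) \<omega> - A (p i) \<omega>\<bar>) \<le> C)"

definition semimartingale :: "'a measure \<Rightarrow> (real \<Rightarrow> 'a measure) \<Rightarrow> (real \<Rightarrow> 'a \<Rightarrow> real) \<Rightarrow> bool" where
  "semimartingale M F X \<longleftrightarrow>
     adapted F X \<and> cadlag M X \<and>
     (\<exists>L A. local_martingale M F L \<and> (\<forall>\<omega>\<in>space M. L 0 \<omega> = 0) \<and>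
        adapted F A \<and> cadlag M A \<and> finite_variation M A \<and> (\<forall>\<omega>\<in>space M. A 0 \<omega> = 0) \<and>
        (\<forall>t\<ge>0. \<forall>\<omega>\<in>space M. X t \<omega> = X 0 \<omega> + L t \<omega> + A t \<omega>))"

definition pricing_kernel :: "'a measure \<Rightarrow> (real \<Rightarrow> 'a measure) \<Rightarrow> (real \<Rightarrow> 'a \<Rightarrow> real) \<Rightarrow> bool" where
  "pricing_kernel M F \<pi> \<longleftrightarrow>
     semimartingale M F \<pi> \<and>
     (\<forall>t\<ge>0. AE \<omega> in M. \<pi> t \<omega> > 0) \<and>
     (\<forall>t\<ge>0. integrable M (\<pi> t)) \<and>
     Liminf at_top (\<lambda>t::real. ereal (integral\<^sup>L M (\<pi> t))) = 0"

definition bond_price :: "'a measure \<Rightarrow> (real \<Rightarrow> 'a measure) \<Rightarrow> (real \<Rightarrow> 'a \<Rightarrow> real) \<Rightarrow> real \<Rightarrow> real \<Rightarrow> 'a \<Rightarrow> real" where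
  "bond_price M F \<pi> t T = (\<lambda>\<omega>. real_cond_exp M (F t) (\<pi> T) \<omega> / \<pi> t \<omega>)"

definition exp_rate :: "'a measure \<Rightarrow> (real \<Rightarrow> 'a measure) \<Rightarrow> (real \<Rightarrow> 'a \<Rightarrow> real) \<Rightarrow> real \<Rightarrow> real \<Rightarrow> 'a \<Rightarrow> real" where
  "exp_rate M F \<pi> t T = (\<lambda>\<omega>. - ln (bond_price M F \<pi> t T \<omega>) / (T - t))"

definition is_ess_sup :: "'a measure \<Rightarrow> 'a measure \<Rightarrow> 'i set \<Rightarrow> ('i \<Rightarrow> 'a \<Rightarrow> ereal) \<Rightarrow> ('a \<Rightarrow> ereal) \<Rightarrow> bool" where
  "is_ess_sup M G I A Z \<longleftrightarrow>
     Z \<in> borel_measurable G \<and>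
     (\<forall>y\<in>I. AE \<omega> in M. A y \<omega> \<le> Z \<omega>) \<and>
     (\<forall>W \<in> borel_measurable G. (\<forall>y\<in>I. AE \<omega> in M. A y \<omega> \<le> W \<omega>) \<longrightarrow> (AE \<omega> in M. Z \<omega> \<le> W \<omega>))"

definition is_ess_inf :: "'a measure \<Rightarrow> 'a measure \<Rightarrow> 'i set \<Rightarrow> ('i \<Rightarrow> 'a \<Rightarrow> ereal) \<Rightarrow> ('a \<Rightarrow> ereal) \<Rightarrow> bool" where
  "is_ess_inf M G I A Z \<longleftrightarrow>
     Z \<in> borel_measurable G \<and>
     (\<forall>y\<in>I. AE \<omega> in M. Z \<omega> \<le> A y \<omega>) \<and>
     (\<forall>W \<in> borel_measurable G. (\<forall>y\<in>I. AE \<omega> in M. W \<omega> \<le> A y \<omega>) \<longrightarrow> (AE \<omega> in M. W \<omega> \<le> Z \<omega>))"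

definition ess_sup_fam :: "'a measure \<Rightarrow> 'a measure \<Rightarrow> 'i set \<Rightarrow> ('i \<Rightarrow> 'a \<Rightarrow> ereal) \<Rightarrow> 'a \<Rightarrow> ereal" where
  "ess_sup_fam M G I A = (SOME Z. is_ess_sup M G I A Z)"

definition ess_inf_fam :: "'a measure \<Rightarrow> 'a measure \<Rightarrow> 'i set \<Rightarrow> ('i \<Rightarrow> 'a \<Rightarrow> ereal) \<Rightarrow> 'a \<Rightarrow> ereal" where
  "ess_inf_fam M G I A = (SOME Z. is_ess_inf M G I A Z)"

text \<open>limsup_{x\<rightarrow>\<infinity>} A_x := ess inf_x ess sup_{y\<ge>x} A_y, relative to G.
  The index x ranges over I (the set where A is defined).\<close>
definition ess_limsup :: "'a measure \<Rightarrow> 'a measure \<Rightarrow> real set \<Rightarrow> (real \<Rightarrow> 'a \<Rightarrow> ereal) \<Rightarrow> 'a \<Rightarrow> ereal" where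
  "ess_limsup M G I A = ess_inf_fam M G I (\<lambda>x. ess_sup_fam M G (I \<inter> {x..}) A)"

definition long_rate :: "'a measure \<Rightarrow> (real \<Rightarrow> 'a measure) \<Rightarrow> (real \<Rightarrow> 'a \<Rightarrow> real) \<Rightarrow> real \<Rightarrow> 'a \<Rightarrow> ereal" where
  "long_rate M F \<pi> t = ess_limsup M (F t) {t<..} (\<lambda>T \<omega>. ereal (exp_rate M F \<pi> t T \<omega>))"

end

theory Submission
  imports Defs
begin

text \<open>
  Essential suprema and infima of arbitrary families exist: the a.s. upper bounds of a family
  form a set closed under countable infima, and an element of such a set minimising E[phi(W)],
  for a bounded strictly increasing phi, is a.s. below every other element.

  For the monotonicity fix s \<le> t < x and a level c, and let A be the F_t-event where
  ess sup_{T \<ge> x} R(t,T) < c < R(s,\<infinity>). On A, exp(-c(T-t)) \<pi>_t \<le> E[\<pi>_T | F_t] for all T \<ge> x,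
  so by the tower property exp(-c(T-t)) E[1_A \<pi>_t | F_s] \<le> E[\<pi>_T | F_s]. Wherever
  E[1_A \<pi>_t | F_s] > 0 this bounds the bond prices at time s from below and forces
  R(s,\<infinity>) \<le> c. Hence E[1_A \<pi>_t | F_s] vanishes on the F_s-event {R(s,\<infinity>) > c}, which contains A,
  so E[1_A \<pi>_t] = 0 and A is null. Letting c range over the rationals gives
  R(s,\<infinity>) \<le> ess sup_{T \<ge> x} R(t,T) for every x > t; since R(s,\<infinity>) is F_t-measurable, this
  yields R(s,\<infinity>) \<le> R(t,\<infinity>).
\<close>

definition ereal_squash :: "ereal \<Rightarrow> real" where
  "ereal_squash x = arctan (real_of_ereal x) + (if x = \<infinity> then 2 else if x = -\<infinity> then -2 else 0)"

lemma borel_measurable_ereal_squash [measurable]: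
  "f \<in> borel_measurable M \<Longrightarrow> (\<lambda>x. ereal_squash (f x)) \<in> borel_measurable M"
proof -
  have "ereal_squash = (\<lambda>x. arctan (real_of_ereal x) + 2 * indicator {\<infinity>} x - 2 * indicator {-\<infinity>} x)"
    by (auto simp: ereal_squash_def indicator_def fun_eq_iff)
  also have "\<dots> \<in> borel_measurable borel" by measurable
  finally show "f \<in> borel_measurable M \<Longrightarrow> (\<lambda>x. ereal_squash (f x)) \<in> borel_measurable M"
    using measurable_compose by blast
qed

lemma abs_arctan_less_2: "\<bar>arctan r\<bar> < 2"
  using arctan_bounded[of r] pi_less_4 by fastforce

lemma abs_ereal_squash_le: "\<bar>ereal_squash x\<bar> \<le> 2"
  unfolding ereal_squash_def using abs_arctan_less_2 by (cases x) (auto simp: less_imp_le)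

lemma strict_mono_ereal_squash: "strict_mono ereal_squash"
proof
  fix x y :: ereal assume "x < y"
  then show "ereal_squash x < ereal_squash y"
    unfolding ereal_squash_def using abs_arctan_less_2
    by (cases x; cases y) (auto simp: arctan_less_iff abs_less_iff, (smt (verit) abs_arctan_less_2)+)
qed

lemma (in prob_space) integrable_ereal_squash:
  "f \<in> borel_measurable M \<Longrightarrow> integrable M (\<lambda>\<omega>. ereal_squash (f \<omega>))"
  by (rule integrable_const_bound[where B=2]) (auto simp: abs_ereal_squash_le)

lemma (in prob_space) AE_le_if_integral_ereal_squash_min_ge:
  fixes Z W :: "'a \<Rightarrow> ereal"
  assumes [measurable]: "Z \<in> borel_measurable M" "W \<in> borel_measurable M"
    and "(\<integral>\<omega>. ereal_squash (Z \<omega>) \<partial>M) \<le> (\<integral>\<omega>. ereal_squash (min (Z \<omega>) (W \<omega>)) \<partial>M)"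
  shows "AE \<omega> in M. Z \<omega> \<le> W \<omega>"
proof -
  define d where "d \<omega> = ereal_squash (Z \<omega>) - ereal_squash (min (Z \<omega>) (W \<omega>))" for \<omega>
  have d_int: "integrable M d"
    unfolding d_def by (intro Bochner_Integration.integrable_diff integrable_ereal_squash) auto
  have d_nonneg: "AE \<omega> in M. 0 \<le> d \<omega>"
    using strict_mono_ereal_squash by (auto simp: d_def strict_mono_less_eq)
  have "integral\<^sup>L M d \<le> 0"
    using assms(3) unfolding d_def
    by (subst Bochner_Integration.integral_diff) (auto intro: integrable_ereal_squash)
  then have "AE \<omega> in M. d \<omega> = 0"
    using integral_nonneg_eq_0_iff_AE[OF d_int d_nonneg] integral_nonneg_AE[OF d_nonneg] by simp
  then show ?thesis
    by eventually_elim (auto simp: d_def min_def strict_mono_eq[OF strict_mono_ereal_squash] split: if_splits)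
qed

lemma real_le_if_le_plus_inverse_Suc:
  fixes a b :: real
  assumes "\<And>n::nat. a \<le> b + 1 / Suc n"
  shows "a \<le> b"
proof (rule field_le_epsilon)
  fix e :: real assume "0 < e"
  then obtain n where "1 / real (Suc n) < e" by (rule nat_approx_posE)
  with assms[of n] show "a \<le> b + e" by linarith
qed

lemma (in prob_space) exists_ereal_squash_integral_minimizer:
  fixes U :: "('a \<Rightarrow> ereal) set"
  assumes "U \<noteq> {}" and U_meas: "U \<subseteq> borel_measurable M"
    and U_Inf: "\<And>Ws. range Ws \<subseteq> U \<Longrightarrow> (\<lambda>\<omega>. INF n::nat. Ws n \<omega>) \<in> U"
  shows "\<exists>Z\<in>U. \<forall>W\<in>U. (\<integral>\<omega>. ereal_squash (Z \<omega>) \<partial>M) \<le> (\<integral>\<omega>. ereal_squash (W \<omega>) \<partial>M)"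
proof -
  define E where "E W = (\<integral>\<omega>. ereal_squash (W \<omega>) \<partial>M)" for W
  have E_mono: "E V \<le> E W" if "\<And>\<omega>. V \<omega> \<le> W \<omega>" "V \<in> U" "W \<in> U" for V W
    unfolding E_def using that U_meas strict_mono_ereal_squash
    by (intro integral_mono integrable_ereal_squash) (auto simp: strict_mono_less_eq)
  have "-2 \<le> E W" if "W \<in> U" for W
  proof -
    have "(\<integral>\<omega>. -2 \<partial>M) \<le> E W"
      unfolding E_def using that U_meas
      by (intro integral_mono integrable_ereal_squash)
        (auto, metis abs_ereal_squash_le abs_le_D2 minus_le_iff)
    then show ?thesis by (simp add: prob_space)
  qed
  then have bdd: "bdd_below (E ` U)" by (auto intro: bdd_belowI[where m="-2"])
  define m where "m = (INF W\<in>U. E W)"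
  have "\<exists>W\<in>U. E W < m + 1 / Suc n" for n :: nat
  proof -
    have "m < m + 1 / Suc n" by simp
    then show ?thesis unfolding m_def by (subst (asm) cINF_less_iff[OF \<open>U \<noteq> {}\<close> bdd])
  qed
  then obtain Ws where Ws: "\<And>n. Ws n \<in> U" "\<And>n. E (Ws n) < m + 1 / Suc n" by metis
  define Z where "Z \<omega> = (INF n. Ws n \<omega>)" for \<omega>
  have "Z \<in> U" unfolding Z_def using Ws(1) by (intro U_Inf) auto
  have "E Z \<le> E (Ws n)" for n
    using Ws(1) \<open>Z \<in> U\<close> by (intro E_mono) (auto simp: Z_def intro: INF_lower)
  then have "E Z \<le> m + 1 / Suc n" for n
    using Ws(2)[of n] by (meson less_imp_le order_trans)
  then have "E Z \<le> m" by (rule real_le_if_le_plus_inverse_Suc)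
  moreover have "m \<le> E W" if "W \<in> U" for W
    unfolding m_def by (rule cINF_lower[OF bdd that])
  ultimately show ?thesis using \<open>Z \<in> U\<close> unfolding E_def by (blast intro: order_trans)
qed

lemma INF_nat_if_zero_eq_min:
  fixes a b :: "'a::complete_linorder"
  shows "(INF n::nat. if n = 0 then a else b) = min a b"
proof -
  have "range (\<lambda>n::nat. if n = 0 then a else b) = {a, b}"
    by (auto simp: image_iff intro: exI[of _ 1])
  then show ?thesis by (simp add: inf_min)
qed

lemma (in prob_space) exists_AE_least_if_countable_Inf_closed:
  fixes U :: "('a \<Rightarrow> ereal) set"
  assumes "U \<noteq> {}" and U_meas: "U \<subseteq> borel_measurable M"
    and U_Inf: "\<And>Ws. range Ws \<subseteq> U \<Longrightarrow> (\<lambda>\<omega>. INF n::nat. Ws n \<omega>) \<in> U"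
  shows "\<exists>Z\<in>U. \<forall>W\<in>U. AE \<omega> in M. Z \<omega> \<le> W \<omega>"
proof -
  obtain Z where "Z \<in> U"
    and Z_min: "\<And>W. W \<in> U \<Longrightarrow> (\<integral>\<omega>. ereal_squash (Z \<omega>) \<partial>M) \<le> (\<integral>\<omega>. ereal_squash (W \<omega>) \<partial>M)"
    using exists_ereal_squash_integral_minimizer[OF assms] by blast
  have "AE \<omega> in M. Z \<omega> \<le> W \<omega>" if "W \<in> U" for W
  proof (rule AE_le_if_integral_ereal_squash_min_ge)
    have "(if n = 0 then Z else W) \<omega> = (if n = 0 then Z \<omega> else W \<omega>)" for n :: nat and \<omega>
      by simp
    then have "(\<lambda>\<omega>. INF n::nat. (if n = 0 then Z else W) \<omega>) = (\<lambda>\<omega>. min (Z \<omega>) (W \<omega>))"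
      by (simp only: INF_nat_if_zero_eq_min)
    then have "(\<lambda>\<omega>. min (Z \<omega>) (W \<omega>)) \<in> U"
      using U_Inf[of "\<lambda>n. if n = 0 then Z else W"] \<open>Z \<in> U\<close> \<open>W \<in> U\<close> by auto
    then show "(\<integral>\<omega>. ereal_squash (Z \<omega>) \<partial>M) \<le> (\<integral>\<omega>. ereal_squash (min (Z \<omega>) (W \<omega>)) \<partial>M)"
      by (rule Z_min)
  qed (use \<open>Z \<in> U\<close> \<open>W \<in> U\<close> U_meas in auto)
  with \<open>Z \<in> U\<close> show ?thesis by blast
qed

lemma is_ess_sup_ess_sup_fam:
  assumes "prob_space M" and "subalgebra M G"
  shows "is_ess_sup M G I A (ess_sup_fam M G I A)"
proof -
  interpret prob_space M by fact
  define U where "U = {W \<in> borel_measurable G. \<forall>y\<in>I. AE \<omega> in M. A y \<omega> \<le> W \<omega>}"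
  have "(\<lambda>_. \<infinity>) \<in> U" unfolding U_def by auto
  moreover have "U \<subseteq> borel_measurable M"
    unfolding U_def using measurable_from_subalg[OF \<open>subalgebra M G\<close>] by blast
  moreover have "(\<lambda>\<omega>. INF n::nat. Ws n \<omega>) \<in> U" if "range Ws \<subseteq> U" for Ws
  proof -
    have [measurable]: "Ws n \<in> borel_measurable G" for n using that unfolding U_def by auto
    have "AE \<omega> in M. A y \<omega> \<le> (INF n. Ws n \<omega>)" if "y \<in> I" for y
    proof -
      have "AE \<omega> in M. \<forall>n. A y \<omega> \<le> Ws n \<omega>"
        using \<open>range Ws \<subseteq> U\<close> \<open>y \<in> I\<close> unfolding U_def AE_all_countable by auto
      then show ?thesis by eventually_elim (auto intro: INF_greatest)
    qed
    then show ?thesis unfolding U_def by auto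
  qed
  ultimately obtain Z where "Z \<in> U" "\<forall>W\<in>U. AE \<omega> in M. Z \<omega> \<le> W \<omega>"
    using exists_AE_least_if_countable_Inf_closed[of U] by blast
  then have "is_ess_sup M G I A Z" unfolding is_ess_sup_def U_def by auto
  then show ?thesis unfolding ess_sup_fam_def by (rule someI[where P="is_ess_sup M G I A"])
qed

lemma is_ess_inf_iff_is_ess_sup_uminus:
  "is_ess_inf M G I A Z \<longleftrightarrow> is_ess_sup M G I (\<lambda>y \<omega>. - A y \<omega>) (\<lambda>\<omega>. - Z \<omega>)"
proof -
  have all_uminus: "(\<forall>W\<in>borel_measurable G. P W) \<longleftrightarrow> (\<forall>W\<in>borel_measurable G. P (\<lambda>\<omega>. - W \<omega>))"
    for P :: "('a \<Rightarrow> ereal) \<Rightarrow> bool"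
  proof
    assume H: "\<forall>W\<in>borel_measurable G. P (\<lambda>\<omega>. - W \<omega>)"
    show "\<forall>W\<in>borel_measurable G. P W"
    proof
      fix W :: "'a \<Rightarrow> ereal" assume "W \<in> borel_measurable G"
      then have "(\<lambda>\<omega>. - W \<omega>) \<in> borel_measurable G" by simp
      with H have "P (\<lambda>\<omega>. - (- W \<omega>))" by (rule bspec)
      then show "P W" by simp
    qed
  qed simp
  show ?thesis
    unfolding is_ess_inf_def is_ess_sup_def
    by (simp add: ereal_uminus_le_reorder, subst all_uminus, simp)
qed

lemma is_ess_inf_ess_inf_fam:
  assumes "prob_space M" and "subalgebra M G"
  shows "is_ess_inf M G I A (ess_inf_fam M G I A)"
proof -
  have "is_ess_inf M G I A (\<lambda>\<omega>. - ess_sup_fam M G I (\<lambda>y \<omega>. - A y \<omega>) \<omega>)"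
    using is_ess_sup_ess_sup_fam[OF assms] by (simp add: is_ess_inf_iff_is_ess_sup_uminus)
  then show ?thesis unfolding ess_inf_fam_def by (rule someI[where P="is_ess_inf M G I A"])
qed

lemma is_ess_sup_upper: "is_ess_sup M G I A Z \<Longrightarrow> y \<in> I \<Longrightarrow> AE \<omega> in M. A y \<omega> \<le> Z \<omega>"
  and is_ess_sup_least: "is_ess_sup M G I A Z \<Longrightarrow> W \<in> borel_measurable G \<Longrightarrow>
    (\<And>y. y \<in> I \<Longrightarrow> AE \<omega> in M. A y \<omega> \<le> W \<omega>) \<Longrightarrow> AE \<omega> in M. Z \<omega> \<le> W \<omega>"
  and is_ess_sup_measurable: "is_ess_sup M G I A Z \<Longrightarrow> Z \<in> borel_measurable G"
  unfolding is_ess_sup_def by auto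

lemma is_ess_inf_lower: "is_ess_inf M G I A Z \<Longrightarrow> y \<in> I \<Longrightarrow> AE \<omega> in M. Z \<omega> \<le> A y \<omega>"
  and is_ess_inf_greatest: "is_ess_inf M G I A Z \<Longrightarrow> W \<in> borel_measurable G \<Longrightarrow>
    (\<And>y. y \<in> I \<Longrightarrow> AE \<omega> in M. W \<omega> \<le> A y \<omega>) \<Longrightarrow> AE \<omega> in M. W \<omega> \<le> Z \<omega>"
  and is_ess_inf_measurable: "is_ess_inf M G I A Z \<Longrightarrow> Z \<in> borel_measurable G"
  unfolding is_ess_inf_def by auto

lemma (in sigma_finite_subalgebra) AE_eq_0_if_real_cond_exp_nonpos_on:
  fixes g :: "'a \<Rightarrow> real"
  assumes g_int: "integrable M g" and g_nonneg: "AE \<omega> in M. 0 \<le> g \<omega>"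
    and "C \<in> sets F" and g_outside: "\<And>\<omega>. \<omega> \<in> space M - C \<Longrightarrow> g \<omega> = 0"
    and cond_exp_nonpos: "AE \<omega> in M. \<omega> \<in> C \<longrightarrow> real_cond_exp M F g \<omega> \<le> 0"
  shows "AE \<omega> in M. g \<omega> = 0"
proof -
  have "C \<in> sets M" using \<open>C \<in> sets F\<close> subalg by (auto simp: subalgebra_def)
  have g_meas: "g \<in> borel_measurable M" using g_int by (rule borel_measurable_integrable)
  have "AE \<omega> in M. indicator C \<omega> * real_cond_exp M F g \<omega> = 0"
    using cond_exp_nonpos real_cond_exp_pos[OF g_nonneg g_meas]
    by eventually_elim (auto simp: indicator_def)
  then have "(\<integral>\<omega>. indicator C \<omega> * real_cond_exp M F g \<omega> \<partial>M) = 0" by (rule integral_eq_zero_AE)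
  moreover have "(\<integral>\<omega>. indicator C \<omega> * real_cond_exp M F g \<omega> \<partial>M) = (\<integral>\<omega>. indicator C \<omega> * g \<omega> \<partial>M)"
    using integrable_mult_indicator[OF \<open>C \<in> sets M\<close> g_int] \<open>C \<in> sets F\<close> g_meas
    by (intro real_cond_exp_intg(2)) auto
  moreover have "(\<integral>\<omega>. indicator C \<omega> * g \<omega> \<partial>M) = integral\<^sup>L M g"
    using g_outside by (intro Bochner_Integration.integral_cong) (auto simp: indicator_def)
  ultimately have "integral\<^sup>L M g = 0" by simp
  then show ?thesis using integral_nonneg_eq_0_iff_AE[OF g_int g_nonneg] by simp
qed

lemma exp_mult_le_if_neg_ln_div_less:
  fixes p q c \<tau> :: real
  assumes "0 < p" "0 < q" "0 < \<tau>" "- ln (q / p) / \<tau> < c"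
  shows "exp (- c * \<tau>) * p \<le> q"
proof -
  have "- ln (q / p) < c * \<tau>" using assms(4) by (simp only: pos_divide_less_eq[OF assms(3)])
  then have "- c * \<tau> < ln (q / p)" by simp
  then have "exp (- c * \<tau>) < q / p" using assms(1,2) by (metis divide_pos_pos exp_less_cancel_iff exp_ln)
  then show ?thesis using assms(1) by (simp add: less_divide_eq less_imp_le)
qed

lemma neg_ln_div_le_if_exp_mult_le:
  fixes y p q c \<epsilon> \<tau> :: real
  assumes "0 < y" "0 < p" "0 < \<tau>" and bound: "exp (- c * \<tau>) * y \<le> q"
    and "- ln (y / p) \<le> \<epsilon> * \<tau>"
  shows "- ln (q / p) / \<tau> \<le> c + \<epsilon>"
proof -
  have "- c * \<tau> + ln (y / p) = ln (exp (- c * \<tau>) * y / p)"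
    using assms(1,2) by (simp add: ln_mult ln_div)
  also have "\<dots> \<le> ln (q / p)"
    using assms(1,2) bound by (intro ln_mono divide_right_mono) auto
  finally have "- ln (q / p) \<le> (c + \<epsilon>) * \<tau>" using assms(5) by (simp add: algebra_simps)
  then show ?thesis by (simp only: pos_divide_le_eq[OF assms(3)])
qed

lemma ereal_le_if_le_plus_inverse_Suc:
  assumes "\<And>n::nat. L \<le> ereal (c + 1 / Suc n)"
  shows "L \<le> ereal c"
proof (cases L)
  case (real r)
  then show ?thesis using assms by (auto intro: real_le_if_le_plus_inverse_Suc)
qed (use assms[of 0] in auto)

lemma ereal_le_if_rat_upper_bounds:
  fixes L z :: ereal
  assumes "\<And>q::rat. z < ereal (of_rat q) \<Longrightarrow> L \<le> ereal (of_rat q)"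
  shows "L \<le> z"
proof (rule ccontr)
  assume "\<not> L \<le> z"
  then obtain q :: rat where "z < real_of_rat q" "real_of_rat q < L"
    using ereal_dense3 by (meson not_le)
  with assms show False by (meson not_le)
qed

locale positive_adapted_process = prob_space M for M :: "'a measure" +
  fixes F :: "real \<Rightarrow> 'a measure" and \<pi> :: "real \<Rightarrow> 'a \<Rightarrow> real"
  assumes subalgebra_F: "\<And>t. 0 \<le> t \<Longrightarrow> subalgebra M (F t)"
    and sets_F_mono: "\<And>s t. 0 \<le> s \<Longrightarrow> s \<le> t \<Longrightarrow> sets (F s) \<subseteq> sets (F t)"
    and \<pi>_adapted: "\<And>t. 0 \<le> t \<Longrightarrow> \<pi> t \<in> borel_measurable (F t)"
    and \<pi>_pos: "\<And>t. 0 \<le> t \<Longrightarrow> AE \<omega> in M. 0 < \<pi> t \<omega>"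
    and \<pi>_integrable: "\<And>t. 0 \<le> t \<Longrightarrow> integrable M (\<pi> t)"
begin

lemma sigma_finite_subalgebra_F: "0 \<le> t \<Longrightarrow> sigma_finite_subalgebra M (F t)"
  using subalgebra_F by (intro finite_measure_subalgebra_is_sigma_finite) unfold_locales

lemma space_F: "0 \<le> t \<Longrightarrow> space (F t) = space M"
  and sets_F_subset: "0 \<le> t \<Longrightarrow> sets (F t) \<subseteq> sets M"
  using subalgebra_F unfolding subalgebra_def by auto

lemma subalgebra_F_F: "0 \<le> s \<Longrightarrow> s \<le> t \<Longrightarrow> subalgebra (F t) (F s)"
  unfolding subalgebra_def using sets_F_mono[of s t] space_F[of s] space_F[of t] by auto

lemma measurable_F_mono: "0 \<le> s \<Longrightarrow> s \<le> t \<Longrightarrow> f \<in> borel_measurable (F s) \<Longrightarrow> f \<in> borel_measurable (F t)"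
  using measurable_from_subalg[OF subalgebra_F_F] by blast

lemma real_cond_exp_\<pi>_pos: "0 \<le> t \<Longrightarrow> 0 \<le> T \<Longrightarrow> AE \<omega> in M. 0 < real_cond_exp M (F t) (\<pi> T) \<omega>"
  using sigma_finite_subalgebra.real_cond_exp_gr_c[OF sigma_finite_subalgebra_F \<pi>_integrable \<pi>_pos] .

abbreviation tail_rate :: "real \<Rightarrow> real \<Rightarrow> 'a \<Rightarrow> ereal" where
  "tail_rate t x \<equiv> ess_sup_fam M (F t) ({t<..} \<inter> {x..}) (\<lambda>T \<omega>. ereal (exp_rate M F \<pi> t T \<omega>))"

lemma is_ess_sup_tail_rate:
  "0 \<le> t \<Longrightarrow> is_ess_sup M (F t) ({t<..} \<inter> {x..}) (\<lambda>T \<omega>. ereal (exp_rate M F \<pi> t T \<omega>)) (tail_rate t x)"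
  by (rule is_ess_sup_ess_sup_fam[OF prob_space_axioms subalgebra_F])

lemma is_ess_inf_long_rate: "0 \<le> t \<Longrightarrow> is_ess_inf M (F t) {t<..} (tail_rate t) (long_rate M F \<pi> t)"
  unfolding long_rate_def ess_limsup_def by (rule is_ess_inf_ess_inf_fam[OF prob_space_axioms subalgebra_F])

lemma tail_rate_measurable: "0 \<le> t \<Longrightarrow> tail_rate t x \<in> borel_measurable (F t)"
  by (rule is_ess_sup_measurable[OF is_ess_sup_tail_rate])

lemma long_rate_measurable: "0 \<le> t \<Longrightarrow> long_rate M F \<pi> t \<in> borel_measurable (F t)"
  by (rule is_ess_inf_measurable[OF is_ess_inf_long_rate])

lemma discounted_\<pi>_le_real_cond_exp_where_tail_rate_less:
  assumes "0 \<le> t" "t < x" "x \<le> T" and A: "A \<subseteq> {\<omega>. tail_rate t x \<omega> < ereal c}"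
  shows "AE \<omega> in M. exp (- c * (T - t)) * (indicator A \<omega> * \<pi> t \<omega>) \<le> real_cond_exp M (F t) (\<pi> T) \<omega>"
proof -
  have "0 \<le> T" using assms by linarith
  have "AE \<omega> in M. ereal (exp_rate M F \<pi> t T \<omega>) \<le> tail_rate t x \<omega>"
    using assms by (intro is_ess_sup_upper[OF is_ess_sup_tail_rate]) auto
  with \<pi>_pos[OF \<open>0 \<le> t\<close>] real_cond_exp_\<pi>_pos[OF \<open>0 \<le> t\<close> \<open>0 \<le> T\<close>]
  show ?thesis
  proof eventually_elim
    case (elim \<omega>)
    show ?case
    proof (cases "\<omega> \<in> A")
      case True
      with A have "tail_rate t x \<omega> < ereal c" by blast
      with elim(3) have "ereal (exp_rate M F \<pi> t T \<omega>) < ereal c" by (rule le_less_trans)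
      then have "- ln (real_cond_exp M (F t) (\<pi> T) \<omega> / \<pi> t \<omega>) / (T - t) < c"
        by (simp add: exp_rate_def bond_price_def)
      with elim True assms(2,3) show ?thesis
        using exp_mult_le_if_neg_ln_div_less[of "\<pi> t \<omega>" "real_cond_exp M (F t) (\<pi> T) \<omega>" "T - t" c]
        by simp
    qed (use elim in simp)
  qed
qed

lemma discounted_real_cond_exp_le_where_tail_rate_less:
  assumes "0 \<le> s" "s \<le> t" "t < x" "x \<le> T"
    and "A \<subseteq> {\<omega>. tail_rate t x \<omega> < ereal c}" "A \<in> sets M"
  shows "AE \<omega> in M. exp (- c * (T - t)) * real_cond_exp M (F s) (\<lambda>\<omega>. indicator A \<omega> * \<pi> t \<omega>) \<omega>
            \<le> real_cond_exp M (F s) (\<pi> T) \<omega>"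
proof -
  have "0 \<le> t" "0 \<le> T" using assms by linarith+
  interpret S: sigma_finite_subalgebra M "F s" by (rule sigma_finite_subalgebra_F[OF \<open>0 \<le> s\<close>])
  interpret T: sigma_finite_subalgebra M "F t" by (rule sigma_finite_subalgebra_F[OF \<open>0 \<le> t\<close>])
  have int_A: "integrable M (\<lambda>\<omega>. indicator A \<omega> * \<pi> t \<omega>)"
    using integrable_mult_indicator[OF \<open>A \<in> sets M\<close> \<pi>_integrable[OF \<open>0 \<le> t\<close>]] by simp
  have "AE \<omega> in M. real_cond_exp M (F s) (\<lambda>\<omega>. exp (- c * (T - t)) * (indicator A \<omega> * \<pi> t \<omega>)) \<omega>
      \<le> real_cond_exp M (F s) (real_cond_exp M (F t) (\<pi> T)) \<omega>"
    using discounted_\<pi>_le_real_cond_exp_where_tail_rate_less[OF \<open>0 \<le> t\<close> assms(3-5)] int_A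
      T.real_cond_exp_int(1)[OF \<pi>_integrable[OF \<open>0 \<le> T\<close>]]
    by (intro S.real_cond_exp_mono) auto
  moreover have "AE \<omega> in M. real_cond_exp M (F s) (real_cond_exp M (F t) (\<pi> T)) \<omega>
      = real_cond_exp M (F s) (\<pi> T) \<omega>"
    using subalgebra_F[OF \<open>0 \<le> t\<close>] subalgebra_F_F[OF assms(1,2)] \<pi>_integrable[OF \<open>0 \<le> T\<close>]
    by (rule S.real_cond_exp_nested_subalg)
  moreover note S.real_cond_exp_cmult[OF int_A, of "exp (- c * (T - t))"]
  ultimately show ?thesis by eventually_elim simp
qed

lemma long_rate_le_where_discounted_bound_on_level_set:
  assumes "0 \<le> s" and [measurable]: "Y \<in> borel_measurable (F s)" and "0 < \<epsilon>"
    and bound: "\<And>T. x \<le> T \<Longrightarrow> AE \<omega> in M. exp (- c * (T - s)) * Y \<omega> \<le> real_cond_exp M (F s) (\<pi> T) \<omega>"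
  shows "AE \<omega> in M. 0 < Y \<omega> \<and> 0 < \<pi> s \<omega> \<and> - ln (Y \<omega> / \<pi> s \<omega>) \<le> k
           \<longrightarrow> long_rate M F \<pi> s \<omega> \<le> ereal (c + \<epsilon>)"
proof -
  have [measurable]: "\<pi> s \<in> borel_measurable (F s)" by (rule \<pi>_adapted[OF \<open>0 \<le> s\<close>])
  define W where "W \<omega> = (if 0 < Y \<omega> \<and> 0 < \<pi> s \<omega> \<and> - ln (Y \<omega> / \<pi> s \<omega>) \<le> k then ereal (c + \<epsilon>) else \<infinity>)"
    for \<omega>
  have W_meas: "W \<in> borel_measurable (F s)" unfolding W_def by measurable
  define T\<^sub>0 where "T\<^sub>0 = max x (s + \<bar>k\<bar> / \<epsilon> + 1)"
  have "AE \<omega> in M. ereal (exp_rate M F \<pi> s T \<omega>) \<le> W \<omega>" if T: "T \<in> {s<..} \<inter> {T\<^sub>0..}" for T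
  proof -
    have "\<bar>k\<bar> / \<epsilon> \<le> T - s" using T by (auto simp: T\<^sub>0_def)
    then have k_le: "k \<le> \<epsilon> * (T - s)" using \<open>0 < \<epsilon>\<close> by (simp add: pos_divide_le_eq mult.commute)
    have "x \<le> T" using T by (simp add: T\<^sub>0_def)
    from bound[OF this] show ?thesis
    proof eventually_elim
      case (elim \<omega>)
      then show ?case
        using T k_le neg_ln_div_le_if_exp_mult_le[of "Y \<omega>" "\<pi> s \<omega>" "T - s" c "real_cond_exp M (F s) (\<pi> T) \<omega>" \<epsilon>]
        by (auto simp: W_def T\<^sub>0_def exp_rate_def bond_price_def)
    qed
  qed
  then have "AE \<omega> in M. tail_rate s T\<^sub>0 \<omega> \<le> W \<omega>"
    by (intro is_ess_sup_least[OF is_ess_sup_tail_rate[OF \<open>0 \<le> s\<close>] W_meas])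
  moreover have "AE \<omega> in M. long_rate M F \<pi> s \<omega> \<le> tail_rate s T\<^sub>0 \<omega>"
    using \<open>0 < \<epsilon>\<close> by (intro is_ess_inf_lower[OF is_ess_inf_long_rate[OF \<open>0 \<le> s\<close>]])
      (auto simp: T\<^sub>0_def less_max_iff_disj intro: add_nonneg_pos)
  ultimately show ?thesis by eventually_elim (auto simp: W_def)
qed

lemma long_rate_le_where_discounted_bound:
  assumes "0 \<le> s" and "Y \<in> borel_measurable (F s)"
    and bound: "\<And>T. x \<le> T \<Longrightarrow> AE \<omega> in M. exp (- c * (T - s)) * Y \<omega> \<le> real_cond_exp M (F s) (\<pi> T) \<omega>"
  shows "AE \<omega> in M. 0 < Y \<omega> \<and> 0 < \<pi> s \<omega> \<longrightarrow> long_rate M F \<pi> s \<omega> \<le> ereal c"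
proof -
  have "AE \<omega> in M. \<forall>k::nat. \<forall>n::nat. 0 < Y \<omega> \<and> 0 < \<pi> s \<omega> \<and> - ln (Y \<omega> / \<pi> s \<omega>) \<le> k
           \<longrightarrow> long_rate M F \<pi> s \<omega> \<le> ereal (c + 1 / Suc n)"
    unfolding AE_all_countable
    using long_rate_le_where_discounted_bound_on_level_set[OF assms(1,2) _ bound] by simp
  then show ?thesis
  proof eventually_elim
    case (elim \<omega>)
    obtain k :: nat where "- ln (Y \<omega> / \<pi> s \<omega>) \<le> k" using real_arch_simple by blast
    with elim show ?case by (blast intro: ereal_le_if_le_plus_inverse_Suc)
  qed
qed

lemma long_rate_le_where_tail_rate_less:
  assumes "0 \<le> s" "s \<le> t" "t < x"
  shows "AE \<omega> in M. tail_rate t x \<omega> < ereal c \<longrightarrow> long_rate M F \<pi> s \<omega> \<le> ereal c"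
proof -
  have "0 \<le> t" using assms by linarith
  interpret S: sigma_finite_subalgebra M "F s" by (rule sigma_finite_subalgebra_F[OF \<open>0 \<le> s\<close>])
  have [measurable]: "tail_rate t x \<in> borel_measurable (F t)" "long_rate M F \<pi> s \<in> borel_measurable (F s)"
    "long_rate M F \<pi> s \<in> borel_measurable (F t)"
    using tail_rate_measurable[OF \<open>0 \<le> t\<close>] long_rate_measurable[OF \<open>0 \<le> s\<close>]
      measurable_F_mono[OF assms(1,2) long_rate_measurable[OF \<open>0 \<le> s\<close>]] by auto
  define A where "A = {\<omega> \<in> space M. tail_rate t x \<omega> < ereal c \<and> ereal c < long_rate M F \<pi> s \<omega>}"
  define C where "C = {\<omega> \<in> space M. ereal c < long_rate M F \<pi> s \<omega>}"
  have "A \<in> sets (F t)" unfolding A_def space_F[OF \<open>0 \<le> t\<close>, symmetric] by measurable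
  then have "A \<in> sets M" using sets_F_subset[OF \<open>0 \<le> t\<close>] by blast
  have "C \<in> sets (F s)" unfolding C_def space_F[OF \<open>0 \<le> s\<close>, symmetric] by measurable
  define g where "g = (\<lambda>\<omega>. indicator A \<omega> * \<pi> t \<omega>)"
  have g_int: "integrable M g"
    unfolding g_def using integrable_mult_indicator[OF \<open>A \<in> sets M\<close> \<pi>_integrable[OF \<open>0 \<le> t\<close>]] by simp
  define Y where "Y = (\<lambda>\<omega>. exp (c * (t - s)) * real_cond_exp M (F s) g \<omega>)"
  have "AE \<omega> in M. exp (- c * (T - s)) * Y \<omega> \<le> real_cond_exp M (F s) (\<pi> T) \<omega>" if "x \<le> T" for T
  proof -
    have "exp (- c * (T - s)) * exp (c * (t - s)) = exp (- c * (T - t))"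
      by (simp add: mult_exp_exp algebra_simps)
    moreover have "A \<subseteq> {\<omega>. tail_rate t x \<omega> < ereal c}" by (auto simp: A_def)
    ultimately show ?thesis
      using discounted_real_cond_exp_le_where_tail_rate_less[OF assms that _ \<open>A \<in> sets M\<close>]
      unfolding Y_def g_def by (simp add: mult.assoc[symmetric])
  qed
  then have "AE \<omega> in M. 0 < Y \<omega> \<and> 0 < \<pi> s \<omega> \<longrightarrow> long_rate M F \<pi> s \<omega> \<le> ereal c"
    by (intro long_rate_le_where_discounted_bound[OF \<open>0 \<le> s\<close>]) (auto simp: Y_def)
  with \<pi>_pos[OF \<open>0 \<le> s\<close>] have "AE \<omega> in M. \<omega> \<in> C \<longrightarrow> real_cond_exp M (F s) g \<omega> \<le> 0"
    by eventually_elim (auto simp: C_def Y_def zero_less_mult_iff)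
  then have "AE \<omega> in M. g \<omega> = 0"
  proof (rule S.AE_eq_0_if_real_cond_exp_nonpos_on[OF g_int _ \<open>C \<in> sets (F s)\<close>, rotated 2])
    show "AE \<omega> in M. 0 \<le> g \<omega>" using \<pi>_pos[OF \<open>0 \<le> t\<close>] by eventually_elim (simp add: g_def)
    show "g \<omega> = 0" if "\<omega> \<in> space M - C" for \<omega> using that by (simp add: g_def A_def C_def)
  qed
  with \<pi>_pos[OF \<open>0 \<le> t\<close>] AE_space show ?thesis
    by eventually_elim (auto simp: g_def A_def indicator_def not_less split: if_splits)
qed

lemma long_rate_mono:
  assumes "0 \<le> s" "s \<le> t"
  shows "AE \<omega> in M. long_rate M F \<pi> s \<omega> \<le> long_rate M F \<pi> t \<omega>"
proof (rule is_ess_inf_greatest[OF is_ess_inf_long_rate])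
  show "long_rate M F \<pi> s \<in> borel_measurable (F t)"
    using measurable_F_mono[OF assms long_rate_measurable[OF assms(1)]] .
  fix x assume "x \<in> {t<..}"
  then have "AE \<omega> in M. \<forall>q::rat. tail_rate t x \<omega> < ereal (of_rat q) \<longrightarrow> long_rate M F \<pi> s \<omega> \<le> ereal (of_rat q)"
    using assms unfolding AE_all_countable by (intro allI long_rate_le_where_tail_rate_less) auto
  then show "AE \<omega> in M. long_rate M F \<pi> s \<omega> \<le> tail_rate t x \<omega>"
    by eventually_elim (rule ereal_le_if_rat_upper_bounds, blast)
qed (use assms in linarith)

end

theorem proposition5:
  fixes M :: "'a measure" and F :: "real \<Rightarrow> 'a measure" and \<pi> :: "real \<Rightarrow> 'a \<Rightarrow> real"
  assumes "prob_space M"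
    and "usual_conditions M F"
    and "pricing_kernel M F \<pi>"
    and "0 \<le> s" and "s \<le> t"
  shows "AE \<omega> in M. long_rate M F \<pi> t \<omega> \<ge> long_rate M F \<pi> s \<omega>"
proof -
  have "filtration_on M F" using assms(2) by (simp add: usual_conditions_def)
  moreover have "semimartingale M F \<pi>" "\<forall>t\<ge>0. AE \<omega> in M. 0 < \<pi> t \<omega>" "\<forall>t\<ge>0. integrable M (\<pi> t)"
    using assms(3) by (simp_all add: pricing_kernel_def)
  ultimately interpret positive_adapted_process M F \<pi>
    using assms(1)
    by (intro positive_adapted_process.intro positive_adapted_process_axioms.intro)
      (simp_all add: filtration_on_def semimartingale_def adapted_def)
  show ?thesis using long_rate_mono[OF assms(4,5)] by simp
qed

end
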